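(* Let $g,h$ be formal letters with $g\not\equiv h$. For every $n\ge1$, every cyclic subword of the iterated commutator word $[g,h]_n$ of length at least four is magic in $g$ and $h$.
   Context: Iterated commutator words in the free group on $g,h$: $[g,h]_1:=gh^{-1}g^{-1}h$, and for $n\ge 2$, $[g,h]_n$ is the reduced form of $g\,[g,h]_{n-1}^{-1}\,g^{-1}\,[g,h]_{n-1}$. A cyclic permutation of a word $a_1\cdots a_n$ is a word $a_k\cdots a_na_1\cdots a_{k-1}$ for some $k\in[n]$. A word $u$ is a cyclic subword of $w$ if $u$ or $u^{-1}$ is a contiguous subword of some cyclic permutation of $w$; a linear subword is a contiguous subword. A word $u$ is magic in $g$ and $h$ if $u$ and $u^{-1}$ together contain at least three of the four words $gh$, $hg$, $g^{-1}h$, $hg^{-1}$ as linear subwords. *)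

theory Defs
  imports Main
begin

text \<open>Letters of the free group: a generator together with a flag;
  flag False = the generator itself, flag True = its inverse.\<close>
type_synonym 'a letter = "'a \<times> bool"
type_synonym 'a word = "'a letter list"

definition gen :: "'a \<Rightarrow> 'a letter" where "gen a = (a, False)"
definition geninv :: "'a \<Rightarrow> 'a letter" where "geninv a = (a, True)"

definition letter_inv :: "'a letter \<Rightarrow> 'a letter" where
  "letter_inv x = (fst x, \<not> snd x)"

definition word_inv :: "'a word \<Rightarrow> 'a word" where
  "word_inv w = rev (map letter_inv w)"

definition reduce :: "'a word \<Rightarrow> 'a word" where
  "reduce w = foldr (\<lambda>x acc. case acc of [] \<Rightarrow> [x]
       | y # ys \<Rightarrow> (if y = letter_inv x then ys else x # acc)) w []"

fun comm :: "'a \<Rightarrow> 'a \<Rightarrow> nat \<Rightarrow> 'a word" where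
  "comm g h 0 = [gen g, geninv h, geninv g, gen h]"
| "comm g h (Suc 0) = [gen g, geninv h, geninv g, gen h]"
| "comm g h (Suc (Suc n)) =
     (let c = comm g h (Suc n) in reduce ([gen g] @ word_inv c @ [geninv g] @ c))"

definition linear_subword :: "'a list \<Rightarrow> 'a list \<Rightarrow> bool" where
  "linear_subword u w \<longleftrightarrow> (\<exists>p s. w = p @ u @ s)"

text \<open>Cyclic permutations a_k..a_n a_1..a_{k-1}, k in [n], are rotate (k-1) w.\<close>
definition cyclic_subword :: "'a word \<Rightarrow> 'a word \<Rightarrow> bool" where
  "cyclic_subword u w \<longleftrightarrow>
     (\<exists>k < length w. linear_subword u (rotate k w) \<or> linear_subword (word_inv u) (rotate k w))"

definition magic :: "'a \<Rightarrow> 'a \<Rightarrow> 'a word \<Rightarrow> bool" where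
  "magic g h u \<longleftrightarrow>
     3 \<le> card {v \<in> {[gen g, gen h], [gen h, gen g], [geninv g, gen h], [gen h, geninv g]}.
                  linear_subword v u \<or> linear_subword v (word_inv u)}"

end

theory Submission
  imports Defs "HOL-Library.Sublist"
begin

text \<open>A word containing a magic factor is magic, so it suffices to show that every
  length-four factor of the doubled word [g,h]_n [g,h]_n is magic: every rotation of
  [g,h]_n is a factor of it. For n \<ge> 2 the word c = [g,h]_n has the shape
  g h^-1 g h ... h^-1 g^-1 h. In g c^-1 g^-1 c the letter g^-1 cancels the leading g of c
  and nothing else cancels, so [g,h]_(n+1) = g c^-1 (tl c) keeps the shape. Every short
  factor of this word lies inside c^-1, inside c, or inside one of two explicit six-letter
  junction words, which are checked by computation; the same argument shows that the word
  stays reduced.\<close>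

lemma linear_subword_eq_sublist: "linear_subword = sublist"
  by (auto simp: fun_eq_iff linear_subword_def sublist_def)

lemma letter_inv_letter_inv [simp]: "letter_inv (letter_inv x) = x"
  by (simp add: letter_inv_def)

lemma word_inv_word_inv [simp]: "word_inv (word_inv w) = w"
  by (simp add: word_inv_def rev_map comp_def)

lemma length_word_inv [simp]: "length (word_inv w) = length w"
  by (simp add: word_inv_def)

lemma word_inv_append [simp]: "word_inv (xs @ ys) = word_inv ys @ word_inv xs"
  by (simp add: word_inv_def)

lemma word_inv_Cons: "word_inv (x # xs) = word_inv xs @ [letter_inv x]"
  by (simp add: word_inv_def)

lemma sublist_word_inv: "sublist v w \<Longrightarrow> sublist (word_inv v) (word_inv w)"
  unfolding word_inv_def by (simp add: map_mono_sublist)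

lemmas letter_simps = gen_def geninv_def letter_inv_def word_inv_def

definition all_factors :: "('b list \<Rightarrow> bool) \<Rightarrow> nat \<Rightarrow> 'b list \<Rightarrow> bool" where
  "all_factors P k w \<longleftrightarrow> (\<forall>v. length v = k \<longrightarrow> sublist v w \<longrightarrow> P v)"

lemma all_factors_Nil: "0 < k \<Longrightarrow> all_factors P k []"
  by (auto simp: all_factors_def)

lemma length_prefix_iff: "length v = k \<and> prefix v ys \<longleftrightarrow> k \<le> length ys \<and> v = take k ys"
proof
  assume "length v = k \<and> prefix v ys"
  then obtain zs where "ys = v @ zs" "length v = k" by (auto elim: prefixE)
  then show "k \<le> length ys \<and> v = take k ys" by simp
next
  assume "k \<le> length ys \<and> v = take k ys"
  then show "length v = k \<and> prefix v ys" by (simp add: take_is_prefix)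
qed

lemma all_factors_Cons:
  "all_factors P k (x # xs) \<longleftrightarrow>
    (k \<le> length (x # xs) \<longrightarrow> P (take k (x # xs))) \<and> all_factors P k xs"
proof -
  have "(\<forall>v. length v = k \<and> prefix v (x # xs) \<longrightarrow> P v) \<longleftrightarrow>
      (\<forall>v. k \<le> length (x # xs) \<and> v = take k (x # xs) \<longrightarrow> P v)"
    by (simp only: length_prefix_iff)
  then show ?thesis
    unfolding all_factors_def sublist_Cons_right by blast
qed

lemma all_factors_sublist: "all_factors P k w \<Longrightarrow> sublist v w \<Longrightarrow> all_factors P k v"
  unfolding all_factors_def using sublist_order.order_trans by blast

lemma all_factors_word_inv:
  assumes "all_factors P k w" and "\<And>v. P (word_inv v) = P v"
  shows "all_factors P k (word_inv w)"
  unfolding all_factors_def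
proof (intro allI impI)
  fix v assume "length v = k" "sublist v (word_inv w)"
  then have "length (word_inv v) = k" "sublist (word_inv v) w"
    using sublist_word_inv[of v "word_inv w"] by auto
  then have "P (word_inv v)" using assms(1) by (auto simp: all_factors_def)
  then show "P v" using assms(2) by simp
qed

text \<open>Gluing: a factor of length k \<le> |ys| + 1 of xs ys zs cannot meet both xs and zs.\<close>

lemma all_factors_append_overlap:
  assumes "all_factors P k (xs @ ys)" "all_factors P k (ys @ zs)" "k \<le> Suc (length ys)"
  shows "all_factors P k (xs @ ys @ zs)"
  unfolding all_factors_def
proof (intro allI impI)
  fix v assume v: "length v = k" "sublist v (xs @ ys @ zs)"
  then have "sublist v ((xs @ ys) @ zs)" by simp
  then consider "sublist v (xs @ ys)" | "sublist v zs"
    | v1 v2 where "v = v1 @ v2" "suffix v1 (xs @ ys)" "prefix v2 zs"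
    unfolding sublist_append by blast
  then show "P v"
  proof cases
    case 1
    then show ?thesis using assms(1) v by (auto simp: all_factors_def)
  next
    case 2
    then have "sublist v (ys @ zs)" by (meson sublist_append)
    then show ?thesis using assms(2) v by (auto simp: all_factors_def)
  next
    case 3
    show ?thesis
    proof (cases "v2 = []")
      case True
      then show ?thesis using 3 assms(1) v by (auto simp: all_factors_def)
    next
      case False
      then have "length v1 \<le> length ys" using 3 v assms(3) by (cases v2) auto
      then have "suffix v1 ys" using 3(2)
        by (metis suffix_append suffix_length_le le_antisym append_eq_append_conv
            length_append le_add2 trans_le_add2 suffix_def)
      then obtain p s where "ys = p @ v1" "zs = v2 @ s" using 3
        by (auto simp: suffix_def prefix_def)
      then have "sublist v (ys @ zs)" using 3
        by (metis append.assoc sublist_appendI)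
      then show ?thesis using assms(2) v by (auto simp: all_factors_def)
    qed
  qed
qed

fun non_cancelling :: "'a word \<Rightarrow> bool" where
  "non_cancelling [x, y] \<longleftrightarrow> y \<noteq> letter_inv x"
| "non_cancelling _ \<longleftrightarrow> True"

lemma non_cancelling_if_length_neq_2: "length v \<noteq> 2 \<Longrightarrow> non_cancelling v"
  by (cases v rule: non_cancelling.cases) auto

lemma non_cancelling_word_inv: "non_cancelling (word_inv v) = non_cancelling v"
proof (cases "length v = 2")
  case True
  then obtain x y where "v = [x, y]"
    by (cases v rule: non_cancelling.cases) auto
  then show ?thesis by (auto simp: word_inv_def letter_inv_def)
qed (simp add: non_cancelling_if_length_neq_2)

lemma reduce_Cons:
  "reduce (x # w) = (case reduce w of [] \<Rightarrow> [x]
     | y # ys \<Rightarrow> (if y = letter_inv x then ys else x # y # ys))"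
  by (simp add: reduce_def split: list.split)

lemma reduce_append:
  "reduce (xs @ ys) = foldr (\<lambda>x acc. case acc of [] \<Rightarrow> [x]
     | y # ys \<Rightarrow> (if y = letter_inv x then ys else x # acc)) xs (reduce ys)"
  by (simp add: reduce_def)

lemma reduce_eq_self: "all_factors non_cancelling 2 w \<Longrightarrow> reduce w = w"
proof (induction w)
  case Nil
  then show ?case by (simp add: reduce_def)
next
  case (Cons x w)
  then have reduced: "all_factors non_cancelling 2 (x # w)" and "reduce w = w"
    by (simp_all add: all_factors_Cons)
  show ?case
  proof (cases w)
    case Nil
    then show ?thesis by (simp add: reduce_def)
  next
    case (Cons y ys)
    with reduced have "y \<noteq> letter_inv x"
      by (simp add: all_factors_Cons)
    with \<open>reduce w = w\<close> Cons show ?thesis by (simp add: reduce_Cons)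
  qed
qed

lemma magic_word_inv: "magic g h (word_inv u) = magic g h u"
  unfolding magic_def by (simp add: disj_commute)

lemma magic_sublist:
  assumes "sublist v u" "magic g h v"
  shows "magic g h u"
proof -
  let ?S = "{[gen g, gen h], [gen h, gen g], [geninv g, gen h], [gen h, geninv g]}"
  let ?occ = "\<lambda>w. {x \<in> ?S. linear_subword x w \<or> linear_subword x (word_inv w)}"
  have "?occ v \<subseteq> ?occ u"
    using assms(1) sublist_word_inv[OF assms(1)] unfolding linear_subword_eq_sublist
    by (auto intro: sublist_order.order_trans)
  then have "card (?occ v) \<le> card (?occ u)"
    by (intro card_mono) auto
  then show ?thesis using assms(2) unfolding magic_def by linarith
qed

lemma magic_iff_length_filter:
  assumes "g \<noteq> h"
  shows "magic g h u \<longleftrightarrow> 3 \<le> length (filter (\<lambda>v. sublist v u \<or> sublist v (word_inv u))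
     [[gen g, gen h], [gen h, gen g], [geninv g, gen h], [gen h, geninv g]])"
proof -
  let ?L = "[[gen g, gen h], [gen h, gen g], [geninv g, gen h], [gen h, geninv g]]"
  let ?Q = "\<lambda>v. sublist v u \<or> sublist v (word_inv u)"
  have "distinct ?L" using assms by (auto simp: gen_def geninv_def)
  then have "card (set (filter ?Q ?L)) = length (filter ?Q ?L)"
    by (simp add: distinct_card)
  moreover have "{v \<in> set ?L. ?Q v} = set (filter ?Q ?L)" by auto
  ultimately show ?thesis
    unfolding magic_def linear_subword_eq_sublist by simp
qed

lemma magic_if_all_factors:
  assumes "all_factors (magic g h) 4 w" "sublist u w" "4 \<le> length u"
  shows "magic g h u"
proof -
  have "sublist (take 4 u) w"
    using sublist_take assms(2) by (rule sublist_order.order_trans)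
  with assms(1,3) have "magic g h (take 4 u)"
    unfolding all_factors_def by simp
  then show ?thesis by (rule magic_sublist[OF sublist_take])
qed

definition framed :: "'a \<Rightarrow> 'a \<Rightarrow> 'a word \<Rightarrow> 'a word" where
  "framed g h mid = [gen g, geninv h, gen g, gen h] @ mid @ [geninv h, geninv g, gen h]"

lemma framed_conjugate:
  "gen g # word_inv (framed g h mid) @ tl (framed g h mid)
     = framed g h (word_inv mid @ [geninv h, geninv g, gen h, geninv g, geninv h, gen g, gen h] @ mid)"
  by (simp add: framed_def word_inv_Cons letter_simps)

lemma all_factors_framed_conjugate:
  assumes c: "all_factors P k (framed g h mid)" and P: "\<And>v. P (word_inv v) = P v"
    and k: "k \<le> 4"
    and junction: "all_factors P k [geninv g, gen h, geninv g, geninv h, gen g, gen h]"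
  shows "all_factors P k (gen g # word_inv (framed g h mid) @ tl (framed g h mid))"
proof -
  let ?T = "[geninv h, gen g, gen h]" and ?E = "[geninv g, gen h, geninv g]"
  have inv: "word_inv (framed g h mid) = ?T @ word_inv mid @ [geninv h] @ ?E"
    by (simp add: framed_def word_inv_Cons letter_simps)
  have tl: "tl (framed g h mid) = ?T @ mid @ [geninv h, geninv g, gen h]"
    by (simp add: framed_def)
  have head: "all_factors P k ([gen g] @ ?T)"
    by (rule all_factors_sublist[OF c]) (simp add: framed_def)
  have inv_factors: "all_factors P k (?T @ word_inv mid @ [geninv h] @ ?E)"
    using all_factors_word_inv[OF c P] inv by simp
  have tl_factors: "all_factors P k (?T @ mid @ [geninv h, geninv g, gen h])"
    using all_factors_sublist[OF c] tl by (metis sublist_tl)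
  have "all_factors P k (?E @ ?T @ mid @ [geninv h, geninv g, gen h])"
    by (rule all_factors_append_overlap) (use junction tl_factors k in simp_all)
  then have "all_factors P k ((?T @ word_inv mid @ [geninv h]) @ ?E @ ?T @ mid @ [geninv h, geninv g, gen h])"
    by (rule all_factors_append_overlap[rotated]) (use inv_factors k in simp_all)
  then have "all_factors P k ([gen g] @ ?T @ word_inv mid @ [geninv h] @ ?E @ ?T @ mid @ [geninv h, geninv g, gen h])"
    using all_factors_append_overlap[OF head] k by simp
  then show ?thesis using inv tl by simp
qed

lemma all_factors_framed_twice:
  assumes c: "all_factors P k (framed g h mid)" and k: "k \<le> 4"
    and junction: "all_factors P k [geninv h, geninv g, gen h, gen g, geninv h, gen g]"
  shows "all_factors P k (framed g h mid @ framed g h mid)"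
proof -
  let ?X = "gen g # [geninv h, gen g, gen h] @ mid"
  let ?Y = "[gen h] @ mid @ [geninv h, geninv g, gen h]"
  have c1: "framed g h mid = ?X @ [geninv h, geninv g, gen h]"
    and c2: "framed g h mid = [gen g, geninv h, gen g] @ ?Y"
    by (simp_all add: framed_def)
  have "all_factors P k ([geninv h, geninv g, gen h] @ [gen g, geninv h, gen g] @ ?Y)"
    by (rule all_factors_append_overlap) (use junction c c2 k in simp_all)
  then have "all_factors P k (?X @ [geninv h, geninv g, gen h] @ [gen g, geninv h, gen g] @ ?Y)"
    by (rule all_factors_append_overlap[rotated]) (use c c1 k in simp_all)
  then show ?thesis using c1 c2 by (metis append.assoc)
qed

lemma reduce_conjugate:
  assumes "all_factors non_cancelling 2 (framed g h mid)"
    and "all_factors non_cancelling 2 (gen g # word_inv (framed g h mid) @ tl (framed g h mid))"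
  shows "reduce ([gen g] @ word_inv (framed g h mid) @ [geninv g] @ framed g h mid)
    = gen g # word_inv (framed g h mid) @ tl (framed g h mid)"
proof -
  let ?c = "framed g h mid"
  have "reduce ([geninv g] @ ?c) = tl ?c"
    using reduce_eq_self[OF assms(1)]
    by (simp add: reduce_Cons framed_def letter_simps)
  also have "\<dots> = reduce (tl ?c)"
    by (rule reduce_eq_self[symmetric], rule all_factors_sublist[OF assms(1)]) simp
  finally have "reduce (([gen g] @ word_inv ?c) @ [geninv g] @ ?c) = reduce (([gen g] @ word_inv ?c) @ tl ?c)"
    by (simp only: reduce_append[of "[gen g] @ word_inv ?c"])
  then show ?thesis using reduce_eq_self[OF assms(2)] by simp
qed

lemma comm_Suc_Suc_framed:
  assumes gh: "g \<noteq> h"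
  shows "\<exists>mid. comm g h (Suc (Suc m)) = framed g h mid
    \<and> all_factors non_cancelling 2 (framed g h mid) \<and> all_factors (magic g h) 4 (framed g h mid)"
proof (induction m)
  case 0
  have "comm g h (Suc (Suc 0)) = framed g h [geninv g]"
    using gh by (simp add: reduce_def framed_def letter_simps)
  moreover have "all_factors non_cancelling 2 (framed g h [geninv g])"
    and "all_factors (magic g h) 4 (framed g h [geninv g])"
    using gh by (simp_all add: framed_def all_factors_Cons all_factors_Nil
        magic_iff_length_filter sublist_code letter_simps)
  ultimately show ?case by blast
next
  case (Suc m)
  then obtain mid where c: "comm g h (Suc (Suc m)) = framed g h mid"
    and reduced: "all_factors non_cancelling 2 (framed g h mid)"
    and magic: "all_factors (magic g h) 4 (framed g h mid)"
    by blast
  let ?d = "gen g # word_inv (framed g h mid) @ tl (framed g h mid)"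
  have reduced': "all_factors non_cancelling 2 ?d"
    by (rule all_factors_framed_conjugate[OF reduced non_cancelling_word_inv])
      (use gh in \<open>simp_all add: all_factors_Cons all_factors_Nil letter_simps\<close>)
  have magic': "all_factors (magic g h) 4 ?d"
    by (rule all_factors_framed_conjugate[OF magic magic_word_inv])
      (use gh in \<open>simp_all add: all_factors_Cons all_factors_Nil magic_iff_length_filter
        sublist_code letter_simps\<close>)
  have "comm g h (Suc (Suc (Suc m))) = ?d"
    using reduce_conjugate[OF reduced reduced'] c by (simp add: Let_def)
  then show ?case using reduced' magic' framed_conjugate by metis
qed

lemma all_factors_magic_comm_twice:
  assumes gh: "g \<noteq> h" and n: "1 \<le> n"
  shows "all_factors (magic g h) 4 (comm g h n @ comm g h n)"
proof (cases "n = 1")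
  case True
  then show ?thesis using gh
    by (simp add: all_factors_Cons all_factors_Nil magic_iff_length_filter sublist_code letter_simps)
next
  case False
  with n obtain m where "n = Suc (Suc m)"
    by (metis One_nat_def Suc_le_D not0_implies_Suc not_one_le_zero)
  with comm_Suc_Suc_framed[OF gh] obtain mid where
    "comm g h n = framed g h mid" "all_factors (magic g h) 4 (framed g h mid)"
    by blast
  then show ?thesis using gh
    by (auto intro!: all_factors_framed_twice simp: all_factors_Cons all_factors_Nil
        magic_iff_length_filter sublist_code letter_simps)
qed

lemma sublist_rotate_append_self: "sublist (rotate k w) (w @ w)"
proof -
  let ?m = "k mod length w"
  have "w @ w = take ?m w @ (drop ?m w @ take ?m w) @ drop ?m w" by simp
  then show ?thesis unfolding rotate_drop_take by (metis sublist_appendI)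
qed

theorem lemma3p14:
  fixes g h :: 'a and n :: nat and u :: "'a word"
  assumes "g \<noteq> h" and "n \<ge> 1"
    and "cyclic_subword u (comm g h n)" and "length u \<ge> 4"
  shows "magic g h u"
proof -
  let ?c = "comm g h n"
  have factors: "all_factors (magic g h) 4 (?c @ ?c)"
    using all_factors_magic_comm_twice[OF assms(1,2)] .
  from assms(3) obtain k where
    "sublist u (rotate k ?c) \<or> sublist (word_inv u) (rotate k ?c)"
    unfolding cyclic_subword_def linear_subword_eq_sublist by blast
  then have "sublist u (?c @ ?c) \<or> sublist (word_inv u) (?c @ ?c)"
    using sublist_rotate_append_self sublist_order.order_trans by blast
  then show ?thesis
    using magic_if_all_factors[OF factors] assms(4) magic_word_inv
    by (metis length_word_inv)
qed

end
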